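(* Let $s$ be a positive rational number, $r$ a rational number, $|q|<1$ and $k\neq1$. Then \begin{multline*} \sum_{j,n\ge0}\frac{(1-kq^{2n+2j})(1+q^{2rj})(k;q)_{n}(k;q)_{n+2j}\,q^{sj^2-jr+2nj+n^2}(-1)^j}{(1-k)(q;q)_{n}(q;q)_{n+2j}}\\ =\frac{(kq;q)_\infty(q^{s-r},q^{s+r},q^{2s};q^{2s})_\infty}{(q;q)_\infty}+\frac{(kq;q)_\infty}{(q;q)_\infty}. \end{multline*} In particular ($s=5/2$, $r=1/2$) the right side equals $\frac{(kq;q)_\infty}{(q,q^4;q^5)_\infty}+\frac{(kq;q)_\infty}{(q;q)_\infty}$.
   Context: Notation: $(x;q)_n=\prod_{i=0}^{n-1}(1-xq^i)$, $(x;q)_\infty=\prod_{i\ge0}(1-xq^i)$, $(x_1,\dots,x_j;q)_\infty=(x_1;q)_\infty\cdots(x_j;q)_\infty$. *)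

theory Defs
  imports "HOL-Analysis.Analysis"
begin

definition qpoch :: "complex \<Rightarrow> complex \<Rightarrow> nat \<Rightarrow> complex" where
  "qpoch x q n = (\<Prod>i<n. 1 - x * q ^ i)"

definition qpoch_inf :: "complex \<Rightarrow> complex \<Rightarrow> complex" where
  "qpoch_inf x q = (\<Prod>i. 1 - x * q ^ i)"

definition qpow :: "complex \<Rightarrow> real \<Rightarrow> complex" where
  "qpow q a = exp (complex_of_real a * Ln q)"

end

theory Submission
  imports Defs
begin

(*
  The summand factors as theta_j * u_j(n) / (1 - k) with
  theta_j = (-1)^j q^(s j^2) (q^(r j) + q^(-r j)) independent of n.  For each j the series
  sum_n u_j(n) telescopes against sum_n u_(j+1)(n), so its value does not depend on j; as j
  tends to infinity only the term n = 0 survives (Tannery's theorem), which gives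
  (k;q)_inf / (q;q)_inf.  The series sum_j theta_j is the Jacobi triple product at x = q^s,
  z = q^r, obtained from its finite form
  (xz;x^2)_N (x/z;x^2)_N = sum_j (-1)^j x^(j^2) [2N, N+j]_(x^2) z^j by letting N tend to
  infinity.  The bound |u_j(n)| <= C |q|^n makes the double series absolutely convergent.
  For s = 5/2, r = 1/2 the mod 5 dissection of (q;q)_inf turns
  (q^2,q^3,q^5;q^5)_inf / (q;q)_inf into 1 / (q,q^4;q^5)_inf.
*)

lemma sum_int_symmetric:
  fixes f :: "int \<Rightarrow> 'a :: comm_monoid_add"
  shows "(\<Sum>j = - int N..int N. f j) + f 0 = (\<Sum>m\<le>N. f (int m) + f (- int m))"
proof (induction N)
  case (Suc N)
  have "{- int (Suc N)..int (Suc N)} = insert (int (Suc N)) (insert (- int (Suc N)) {- int N..int N})"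
    by auto
  then have "(\<Sum>j = - int (Suc N)..int (Suc N). f j)
      = f (int (Suc N)) + f (- int (Suc N)) + (\<Sum>j = - int N..int N. f j)"
    by (simp add: add.assoc)
  then show ?case
    by (simp flip: Suc.IH add: add_ac)
qed simp

lemma summable_power_square_mult_power:
  fixes r s :: real
  assumes "0 \<le> r" "r < 1" "0 \<le> s"
  shows "summable (\<lambda>m. r ^ (m * m) * s ^ m)"
proof -
  have "(\<lambda>m. r ^ m * s) \<longlonglongrightarrow> 0 * s"
    using assms by (intro tendsto_mult LIMSEQ_power_zero tendsto_const) auto
  then have "eventually (\<lambda>m. r ^ m * s < 1/2) sequentially"
    by (intro order_tendstoD) auto
  then obtain M where M: "\<And>m. m \<ge> M \<Longrightarrow> r ^ m * s < 1/2"
    by (auto simp: eventually_at_top_linorder)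
  show ?thesis
  proof (rule summable_comparison_test')
    show "summable (\<lambda>m. (1/2::real) ^ m)"
      by (rule summable_geometric) simp
    fix m assume "m \<ge> M"
    have "norm (r ^ (m * m) * s ^ m) = (r ^ m * s) ^ m"
      using assms by (simp add: power_mult power_mult_distrib abs_mult)
    also have "\<dots> \<le> (1/2) ^ m"
      using M[OF \<open>m \<ge> M\<close>] assms by (intro power_mono) auto
    finally show "norm (r ^ (m * m) * s ^ m) \<le> (1/2) ^ m" .
  qed
qed

lemma has_sum_mult_dominated:
  fixes a :: "'i \<Rightarrow> 'a :: {real_normed_field, banach}" and b :: "'i \<Rightarrow> 'j \<Rightarrow> 'a"
  assumes a: "(a has_sum A) I" "(\<lambda>i. norm (a i)) summable_on I"
    and b: "\<And>i. i \<in> I \<Longrightarrow> (b i has_sum B) J"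
    and g: "g summable_on J" and dom: "\<And>i j. i \<in> I \<Longrightarrow> j \<in> J \<Longrightarrow> norm (b i j) \<le> g j"
  shows "((\<lambda>(i, j). a i * b i j) has_sum A * B) (I \<times> J)"
proof (rule has_sum_SigmaI[where g = "\<lambda>i. a i * B"])
  show "((\<lambda>j. case (i, j) of (i, j) \<Rightarrow> a i * b i j) has_sum a i * B) J" if "i \<in> I" for i
    using has_sum_cmult_right[OF b[OF that]] by simp
  show "((\<lambda>i. a i * B) has_sum A * B) I"
    using a(1) by (rule has_sum_cmult_left)
  have "(\<lambda>(i, j). norm (a i) * g j) summable_on I \<times> J"
  proof (rule summable_on_SigmaI)
    show "((\<lambda>j. case (i, j) of (i, j) \<Rightarrow> norm (a i) * g j) has_sum norm (a i) * infsum g J) J" for i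
      using has_sum_cmult_right[OF has_sum_infsum[OF g]] by simp
    show "(\<lambda>i. norm (a i) * infsum g J) summable_on I"
      using a(2) by (rule summable_on_cmult_left)
    show "0 \<le> (case (i, j) of (i, j) \<Rightarrow> norm (a i) * g j)" if "i \<in> I" "j \<in> J" for i j
      using dom[OF that] by (simp add: order_trans[OF norm_ge_zero])
  qed
  moreover have "norm (case p of (i, j) \<Rightarrow> a i * b i j) \<le> (case p of (i, j) \<Rightarrow> norm (a i) * g j)"
    if "p \<in> I \<times> J" for p
    using that by (auto simp: norm_mult intro!: mult_left_mono dom)
  ultimately have "(\<lambda>p. norm (case p of (i, j) \<Rightarrow> a i * b i j)) summable_on I \<times> J"
    by (rule Infinite_Sum.abs_summable_on_comparison_test')
  then show "(\<lambda>(i, j). a i * b i j) summable_on Sigma I (\<lambda>_. J)"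
    by (rule abs_summable_summable)
qed

section \<open>q-Pochhammer symbols\<close>

lemma qpoch_0 [simp]: "qpoch x q 0 = 1"
  by (simp add: qpoch_def)

lemma qpoch_Suc: "qpoch x q (Suc n) = qpoch x q n * (1 - x * q ^ n)"
  by (simp add: qpoch_def)

lemma qpoch_Suc_shift: "qpoch x q (Suc n) = (1 - x) * qpoch (x * q) q n"
  unfolding qpoch_def by (subst prod.lessThan_Suc_shift) (simp add: mult.assoc)

lemma norm_mult_power_less_1:
  fixes x q :: complex
  assumes "norm x < 1" "norm q \<le> 1"
  shows "norm (x * q ^ n) < 1"
proof -
  have "norm q ^ n \<le> 1"
    using assms(2) by (rule power_le_one[OF norm_ge_zero])
  then have "norm x * norm q ^ n \<le> norm x"
    by (rule mult_left_le) simp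
  with assms(1) show ?thesis
    by (simp add: norm_mult norm_power)
qed

lemma norm_one_minus_mult_power_le:
  fixes x q :: complex
  assumes "norm q \<le> 1"
  shows "norm (1 - x * q ^ n) \<le> 1 + norm x"
proof -
  have "norm x * norm q ^ n \<le> norm x"
    using assms by (simp add: mult_left_le power_le_one)
  then show ?thesis
    using norm_triangle_ineq4[of 1 "x * q ^ n"] by (simp add: norm_mult norm_power)
qed

lemma qpoch_nonzero:
  assumes "norm x < 1" "norm q \<le> 1"
  shows "qpoch x q n \<noteq> 0"
proof -
  have "1 - x * q ^ i \<noteq> 0" for i
    using norm_mult_power_less_1[OF assms, of i] by auto
  then show ?thesis
    by (simp add: qpoch_def)
qed

lemma convergent_prod_qpoch:
  fixes x q :: complex
  assumes "norm q < 1"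
  shows "convergent_prod (\<lambda>i. 1 - x * q ^ i)"
proof -
  have "summable (\<lambda>i. norm x * norm q ^ i)"
    using assms by (intro summable_mult summable_geometric) auto
  then have "summable (\<lambda>i. norm ((1 - x * q ^ i) - 1))"
    by (simp add: norm_mult norm_power)
  then show ?thesis
    by (intro abs_convergent_prod_imp_convergent_prod summable_imp_abs_convergent_prod)
qed

lemma tendsto_qpoch_inf:
  assumes "norm q < 1" "filterlim f sequentially F"
  shows "((\<lambda>n. qpoch x q (f n)) \<longlongrightarrow> qpoch_inf x q) F"
proof -
  have "(\<lambda>n. \<Prod>i\<le>n. 1 - x * q ^ i) \<longlonglongrightarrow> qpoch_inf x q"
    unfolding qpoch_inf_def by (rule convergent_prod_LIMSEQ[OF convergent_prod_qpoch[OF assms(1)]])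
  then have "(\<lambda>n. qpoch x q (Suc n)) \<longlonglongrightarrow> qpoch_inf x q"
    by (simp add: qpoch_def lessThan_Suc_atMost)
  then have "qpoch x q \<longlonglongrightarrow> qpoch_inf x q"
    by (rule LIMSEQ_imp_Suc)
  then show ?thesis
    using assms(2) by (rule filterlim_compose)
qed

lemma qpoch_inf_nonzero:
  assumes "norm q < 1" "norm x < 1"
  shows "qpoch_inf x q \<noteq> 0"
  unfolding qpoch_inf_def
proof (rule prodinf_nonzero[OF convergent_prod_qpoch[OF assms(1)]])
  show "1 - x * q ^ i \<noteq> 0" for i
    using norm_mult_power_less_1[of x q i] assms by auto
qed

lemma qpoch_inf_shift:
  assumes "norm q < 1"
  shows "qpoch_inf x q = (1 - x) * qpoch_inf (x * q) q"
proof -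
  have "(\<lambda>n. qpoch x q (Suc n)) \<longlonglongrightarrow> qpoch_inf x q"
    using assms filterlim_Suc by (rule tendsto_qpoch_inf)
  moreover have "(\<lambda>n. qpoch x q (Suc n)) \<longlonglongrightarrow> (1 - x) * qpoch_inf (x * q) q"
    unfolding qpoch_Suc_shift using assms filterlim_ident by (intro tendsto_intros tendsto_qpoch_inf)
  ultimately show ?thesis
    by (rule LIMSEQ_unique)
qed

lemma Bseq_qpoch:
  assumes "norm q < 1"
  shows "Bseq (qpoch x q)"
  using tendsto_qpoch_inf[OF assms filterlim_ident] by (intro convergent_imp_Bseq convergentI)

lemma Bseq_inverse_qpoch:
  assumes "norm q < 1" "norm x < 1"
  shows "Bseq (\<lambda>n. inverse (qpoch x q n))"
  using tendsto_qpoch_inf[OF assms(1) filterlim_ident] qpoch_inf_nonzero[OF assms]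
  by (rule Bfun_inverse)

lemma qpoch_ratio_bounded:
  assumes "norm q < 1" "norm y < 1"
  obtains K where "\<And>a b c d. norm (qpoch x q a * qpoch x q b / (qpoch y q c * qpoch y q d)) \<le> K"
proof -
  obtain K1 where K1: "\<And>n. norm (qpoch x q n) \<le> K1"
    using Bseq_qpoch[OF assms(1), of x] unfolding Bseq_def by auto
  obtain K2 where K2: "\<And>n. norm (inverse (qpoch y q n)) \<le> K2"
    using Bseq_inverse_qpoch[OF assms] unfolding Bseq_def by auto
  have "norm (qpoch x q a * qpoch x q b / (qpoch y q c * qpoch y q d)) \<le> K1 * K1 * (K2 * K2)" for a b c d
  proof -
    have "norm (qpoch x q a * qpoch x q b / (qpoch y q c * qpoch y q d))
        = norm (qpoch x q a) * norm (qpoch x q b) * (norm (inverse (qpoch y q c)) * norm (inverse (qpoch y q d)))"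
      by (simp add: norm_mult norm_divide norm_inverse divide_inverse)
    also have "\<dots> \<le> K1 * K1 * (K2 * K2)"
      using K1 K2 by (intro mult_mono) (auto intro: order_trans[OF norm_ge_zero])
    finally show ?thesis .
  qed
  then show ?thesis
    using that by blast
qed

section \<open>The inner series\<close>

definition inner_term :: "complex \<Rightarrow> complex \<Rightarrow> nat \<Rightarrow> nat \<Rightarrow> complex" where
  "inner_term k q j n = (1 - k * q ^ (2 * n + 2 * j)) * qpoch k q n * qpoch k q (n + 2 * j)
     * q ^ (2 * n * j + n ^ 2) / (qpoch q q n * qpoch q q (n + 2 * j))"

(* The telescoping difference of inner_term in closed form, see inner_telescope. *)
definition inner_remainder :: "complex \<Rightarrow> complex \<Rightarrow> nat \<Rightarrow> nat \<Rightarrow> complex" where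
  "inner_remainder k q j m = (1 - q ^ (2 * j + 1)) * qpoch k q m * qpoch k q (m + 2 * j + 1)
     * q ^ (m ^ 2 + 2 * m * j + 2 * m) / (qpoch q q m * qpoch q q (m + 2 * j + 1))"

lemma inner_telescope_identity:
  fixes k q x y :: complex
  assumes "1 - q * x \<noteq> 0" "1 - q * x * y \<noteq> 0" "1 - q^2 * x * y \<noteq> 0"
  shows "(1 - y*q) * (1 - k*x) * (1 - k*x*y) * (1 - k*x*y*q) * x^4*y*q^3
           / ((1 - q*x) * (1 - q*x*y) * (1 - q^2*x*y))
       = (1 - y*q) * (1 - k*x*y) * x^2 / (1 - q*x*y)
         + (1 - k*x^2*y*q^2) * (1 - k*x) * (1 - k*x*y) * x^2*y*q / ((1 - q*x) * (1 - q*x*y))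
         - (1 - k*x^2*y*q^2) * (1 - k*x*y) * (1 - k*x*y*q) * x^2 / ((1 - q*x*y) * (1 - q^2*x*y))"
proof -
  define a b c where "a = 1 - q*x" and "b = 1 - q*x*y" and "c = 1 - q^2*x*y"
  have "a \<noteq> 0" "b \<noteq> 0" "c \<noteq> 0"
    using assms by (simp_all add: a_def b_def c_def)
  then show ?thesis
    unfolding a_def[symmetric] b_def[symmetric] c_def[symmetric]
    by (simp add: field_simps) (simp add: a_def b_def c_def, algebra)
qed

lemma inner_terms_factored:
  fixes q k :: complex and j m :: nat
  assumes q: "norm q < 1"
  defines "x \<equiv> q ^ m" and "y \<equiv> q ^ (2 * j)"
    and "P \<equiv> qpoch k q m * qpoch k q (m + 2 * j) * q ^ (2 * m * j + m ^ 2)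
              / (qpoch q q m * qpoch q q (m + 2 * j))"
  shows "inner_term k q j (Suc m)
           = P * ((1 - k*x^2*y*q^2) * (1 - k*x) * (1 - k*x*y) * x^2*y*q / ((1 - q*x) * (1 - q*x*y)))"
    "inner_term k q (Suc j) m
           = P * ((1 - k*x^2*y*q^2) * (1 - k*x*y) * (1 - k*x*y*q) * x^2 / ((1 - q*x*y) * (1 - q^2*x*y)))"
    "inner_remainder k q j m = P * ((1 - y*q) * (1 - k*x*y) * x^2 / (1 - q*x*y))"
    "inner_remainder k q j (Suc m)
           = P * ((1 - y*q) * (1 - k*x) * (1 - k*x*y) * (1 - k*x*y*q) * x^4*y*q^3
                  / ((1 - q*x) * (1 - q*x*y) * (1 - q^2*x*y)))"
proof -
  define E where "E = q ^ (2 * m * j + m ^ 2)"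
  define a b c where "a = 1 - q*x" and "b = 1 - q*x*y" and "c = 1 - q^2*x*y"
  have idx: "Suc m + 2 * j = Suc (m + 2 * j)" "m + 2 * j + 1 = Suc (m + 2 * j)"
    "m + 2 * Suc j = Suc (Suc (m + 2 * j))" "Suc (m + 2 * j) + 1 = Suc (Suc (m + 2 * j))"
    by simp_all
  have xy: "q ^ (m + 2 * j) = x * y"
    by (simp add: x_def y_def power_add)
  have exps: "q ^ (2 * Suc m + 2 * j) = x^2 * y * q^2" "q ^ (2 * m + 2 * Suc j) = x^2 * y * q^2"
    "q ^ (2 * Suc m * j + Suc m ^ 2) = E * x^2 * y * q" "q ^ (2 * m * Suc j + m ^ 2) = E * x^2"
    "q ^ (2 * j + 1) = y * q" "q ^ (m ^ 2 + 2 * m * j + 2 * m) = E * x^2"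
    "q ^ (Suc m ^ 2 + 2 * Suc m * j + 2 * Suc m) = E * x^4 * y * q^3"
    unfolding x_def y_def E_def
    by (simp_all add: power2_eq_square algebra_simps numeral_3_eq_3 flip: power_add power_mult)
  have pochs: "qpoch k q (Suc m) = qpoch k q m * (1 - k*x)"
    "qpoch k q (Suc (m + 2 * j)) = qpoch k q (m + 2 * j) * (1 - k*x*y)"
    "qpoch k q (Suc (Suc (m + 2 * j))) = qpoch k q (m + 2 * j) * (1 - k*x*y) * (1 - k*x*y*q)"
    "qpoch q q (Suc m) = qpoch q q m * a"
    "qpoch q q (Suc (m + 2 * j)) = qpoch q q (m + 2 * j) * b"
    "qpoch q q (Suc (Suc (m + 2 * j))) = qpoch q q (m + 2 * j) * b * c"
    unfolding qpoch_Suc power_Suc xy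
    by (simp_all add: a_def b_def c_def power2_eq_square mult_ac flip: x_def)
  have "1 - q * q ^ n \<noteq> 0" for n
    using norm_mult_power_less_1[of q q n] q by auto
  from this[of m] this[of "m + 2 * j"] this[of "Suc (m + 2 * j)"]
  have "a \<noteq> 0" "b \<noteq> 0" "c \<noteq> 0"
    by (simp_all add: a_def b_def c_def x_def xy power2_eq_square mult.assoc)
  moreover have "qpoch q q m \<noteq> 0" "qpoch q q (m + 2 * j) \<noteq> 0"
    using q by (simp_all add: qpoch_nonzero)
  ultimately show "inner_term k q j (Suc m) = P * ((1 - k*x^2*y*q^2) * (1 - k*x) * (1 - k*x*y) * x^2*y*q / (a * b))"
    "inner_term k q (Suc j) m = P * ((1 - k*x^2*y*q^2) * (1 - k*x*y) * (1 - k*x*y*q) * x^2 / (b * c))"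
    "inner_remainder k q j m = P * ((1 - y*q) * (1 - k*x*y) * x^2 / b)"
    "inner_remainder k q j (Suc m)
       = P * ((1 - y*q) * (1 - k*x) * (1 - k*x*y) * (1 - k*x*y*q) * x^4*y*q^3 / (a * b * c))"
    unfolding inner_term_def inner_remainder_def P_def E_def[symmetric] idx pochs exps
    by (simp_all add: field_simps)
qed

lemma inner_remainder_Suc:
  assumes q: "norm q < 1"
  shows "inner_remainder k q j (Suc m)
           = inner_remainder k q j m + inner_term k q j (Suc m) - inner_term k q (Suc j) m"
proof -
  have "1 - q * q ^ n \<noteq> 0" for n
    using norm_mult_power_less_1[of q q n] q by auto
  from this[of m] this[of "m + 2 * j"] this[of "Suc (m + 2 * j)"]
  have nz: "1 - q * q ^ m \<noteq> 0" "1 - q * q ^ m * q ^ (2 * j) \<noteq> 0" "1 - q^2 * q ^ m * q ^ (2 * j) \<noteq> 0"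
    by (simp_all add: power_add power2_eq_square mult.assoc)
  show ?thesis
    unfolding inner_terms_factored[OF q, where j = j and m = m] inner_telescope_identity[OF nz] by (simp add: algebra_simps)
qed

lemma inner_remainder_0:
  assumes q: "norm q < 1"
  shows "inner_remainder k q j 0 = inner_term k q j 0"
proof -
  have "qpoch q q (2 * j) \<noteq> 0" "1 - q * q ^ (2 * j) \<noteq> 0"
    using q qpoch_nonzero[of q q] norm_mult_power_less_1[of q q "2 * j"] by auto
  then show ?thesis
    unfolding inner_term_def inner_remainder_def by (simp add: qpoch_Suc field_simps)
qed

lemma inner_telescope:
  assumes "norm q < 1"
  shows "(\<Sum>n\<le>m. inner_term k q j n) - (\<Sum>n<m. inner_term k q (Suc j) n) = inner_remainder k q j m"
proof (induction m)
  case 0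
  then show ?case
    using inner_remainder_0[OF assms] by simp
next
  case (Suc m)
  then show ?case
    using inner_remainder_Suc[OF assms, of k j m] by (simp add: algebra_simps)
qed

lemma inner_term_bound:
  assumes q: "norm q < 1"
  obtains C where "C \<ge> 0" "\<And>j n. norm (inner_term k q j n) \<le> C * norm q ^ (n + 2 * n * j)"
proof -
  obtain K where K: "\<And>a b c d. norm (qpoch k q a * qpoch k q b / (qpoch q q c * qpoch q q d)) \<le> K"
    using qpoch_ratio_bounded[OF q q, where x = k] by blast
  have "norm (inner_term k q j n) \<le> (1 + norm k) * norm q ^ (n + 2 * n * j) * K" for j n
  proof -
    have "inner_term k q j n = (1 - k * q ^ (2 * n + 2 * j)) * q ^ (2 * n * j + n ^ 2)
            * (qpoch k q n * qpoch k q (n + 2 * j) / (qpoch q q n * qpoch q q (n + 2 * j)))"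
      by (simp add: inner_term_def)
    also have "norm \<dots> \<le> (1 + norm k) * norm q ^ (n + 2 * n * j) * K"
      unfolding norm_mult norm_power
      using q norm_one_minus_mult_power_le[of q k "2 * n + 2 * j"] K
      by (intro mult_mono power_decreasing) (auto simp: power2_eq_square)
    finally show ?thesis .
  qed
  moreover have "K \<ge> 0"
    using K[of 0 0 0 0] by (rule order_trans[OF norm_ge_zero])
  ultimately show ?thesis
    using that[of "(1 + norm k) * K"] by (simp add: mult_ac)
qed

lemma inner_term_bound_geometric:
  assumes q: "norm q < 1"
  obtains C where "\<And>j n. norm (inner_term k q j n) \<le> C * norm q ^ n"
proof -
  obtain C where C: "C \<ge> 0" "\<And>j n. norm (inner_term k q j n) \<le> C * norm q ^ (n + 2 * n * j)"
    using inner_term_bound[OF q] by blast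
  have "norm (inner_term k q j n) \<le> C * norm q ^ n" for j n
  proof -
    have "norm q ^ (n + 2 * n * j) \<le> norm q ^ n"
      using q by (intro power_decreasing) auto
    then show ?thesis
      using C by (meson order_trans mult_left_mono)
  qed
  then show ?thesis
    using that by blast
qed

lemma inner_remainder_tendsto_0:
  assumes q: "norm q < 1"
  shows "(\<lambda>m. inner_remainder k q j m) \<longlonglongrightarrow> 0"
proof -
  obtain K where K: "\<And>a b c d. norm (qpoch k q a * qpoch k q b / (qpoch q q c * qpoch q q d)) \<le> K"
    using qpoch_ratio_bounded[OF q q, where x = k] by blast
  have bound: "norm (inner_remainder k q j m) \<le> 2 * norm q ^ m * K" for m
  proof -
    have "inner_remainder k q j m = (1 - 1 * q ^ (2 * j + 1)) * q ^ (m ^ 2 + 2 * m * j + 2 * m)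
            * (qpoch k q m * qpoch k q (m + 2 * j + 1) / (qpoch q q m * qpoch q q (m + 2 * j + 1)))"
      by (simp add: inner_remainder_def)
    also have "norm \<dots> \<le> (1 + norm (1 :: complex)) * norm q ^ m * K"
      unfolding norm_mult norm_power
      using q norm_one_minus_mult_power_le[of q 1 "2 * j + 1"] K
      by (intro mult_mono power_decreasing) (auto simp: power2_eq_square)
    finally show ?thesis
      by simp
  qed
  have "(\<lambda>m. 2 * norm q ^ m * K) \<longlonglongrightarrow> 0"
    using q by (intro tendsto_mult_left_zero tendsto_mult_right_zero LIMSEQ_power_zero) simp
  then show ?thesis
    by (rule Lim_null_comparison[OF always_eventually[OF allI[OF bound]]])
qed

lemma summable_norm_inner_term:
  assumes q: "norm q < 1"
  shows "summable (\<lambda>n. norm (inner_term k q j n))"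
proof -
  obtain C where C: "\<And>j n. norm (inner_term k q j n) \<le> C * norm q ^ n"
    using inner_term_bound_geometric[OF q] by blast
  have "summable (\<lambda>n. C * norm q ^ n)"
    using q by (intro summable_mult summable_geometric) simp
  then show ?thesis
    by (rule summable_comparison_test[rotated]) (use C in simp)
qed

lemma suminf_inner_term_Suc:
  assumes q: "norm q < 1"
  shows "suminf (inner_term k q (Suc j)) = suminf (inner_term k q j)"
proof -
  have summable: "summable (inner_term k q j)" "summable (inner_term k q (Suc j))"
    using summable_norm_inner_term[OF q] summable_norm_cancel by blast+
  have "(\<lambda>m. (\<Sum>n\<le>m. inner_term k q j n) - (\<Sum>n<m. inner_term k q (Suc j) n))
          \<longlonglongrightarrow> suminf (inner_term k q j) - suminf (inner_term k q (Suc j))"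
    using summable by (intro tendsto_diff summable_LIMSEQ' summable_LIMSEQ)
  moreover have "(\<lambda>m. (\<Sum>n\<le>m. inner_term k q j n) - (\<Sum>n<m. inner_term k q (Suc j) n)) \<longlonglongrightarrow> 0"
    unfolding inner_telescope[OF q] by (rule inner_remainder_tendsto_0[OF q])
  ultimately show ?thesis
    using LIMSEQ_unique by fastforce
qed

lemma tendsto_inner_term:
  assumes q: "norm q < 1"
  shows "(\<lambda>j. inner_term k q j n) \<longlonglongrightarrow> (if n = 0 then qpoch_inf k q / qpoch_inf q q else 0)"
proof (cases "n = 0")
  case True
  have "inner_term k q j 0 = (1 - k * q ^ (2 * j)) * qpoch k q (2 * j) / qpoch q q (2 * j)" for j
    by (simp add: inner_term_def)
  moreover have "(\<lambda>j. (1 - k * q ^ (2 * j)) * qpoch k q (2 * j) / qpoch q q (2 * j))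
                   \<longlonglongrightarrow> (1 - k * 0) * qpoch_inf k q / qpoch_inf q q"
    using q mult_nat_left_at_top[of 2]
    by (intro tendsto_intros tendsto_qpoch_inf qpoch_inf_nonzero filterlim_compose[OF LIMSEQ_power_zero]) simp_all
  ultimately show ?thesis
    using True by simp
next
  case False
  obtain C where C: "C \<ge> 0" "\<And>j n. norm (inner_term k q j n) \<le> C * norm q ^ (n + 2 * n * j)"
    using inner_term_bound[OF q] by blast
  have bound: "norm (inner_term k q j n) \<le> C * (norm q ^ (2 * n)) ^ j" for j
  proof -
    have "norm q ^ (n + 2 * n * j) \<le> (norm q ^ (2 * n)) ^ j"
      unfolding power_mult[symmetric] using q by (intro power_decreasing) auto
    then show ?thesis
      using C by (meson order_trans mult_left_mono)
  qed
  have "norm q ^ (2 * n) < 1"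
    using q False by (simp add: power_less_one_iff)
  then have "(\<lambda>j. C * (norm q ^ (2 * n)) ^ j) \<longlonglongrightarrow> 0"
    by (intro tendsto_mult_right_zero LIMSEQ_power_zero) simp
  then show ?thesis
    using False Lim_null_comparison[OF always_eventually[OF allI[OF bound]]] by simp
qed

lemma inner_term_sums:
  assumes q: "norm q < 1"
  shows "inner_term k q j sums (qpoch_inf k q / qpoch_inf q q)"
proof -
  define L where "L = qpoch_inf k q / qpoch_inf q q"
  define b where "b n = (if n = 0 then L else 0)" for n :: nat
  have const: "suminf (inner_term k q j) = suminf (inner_term k q 0)" for j
    by (induction j) (simp_all add: suminf_inner_term_Suc[OF q])
  obtain C where C: "\<And>j n. norm (inner_term k q j n) \<le> C * norm q ^ n"
    using inner_term_bound_geometric[OF q] by blast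
  have "(\<lambda>j. \<Sum>n. inner_term k q j n) \<longlonglongrightarrow> suminf b"
  proof (rule tannerys_theorem[THEN conjunct2, THEN conjunct2])
    show "(\<lambda>j. inner_term k q j n) \<longlonglongrightarrow> b n" for n
      unfolding b_def L_def by (rule tendsto_inner_term[OF q])
    show "\<forall>\<^sub>F (n, j) in at_top \<times>\<^sub>F sequentially. norm (inner_term k q j n) \<le> C * norm q ^ n"
      using C by (intro always_eventually) auto
    show "summable (\<lambda>n. C * norm q ^ n)"
      using q by (intro summable_mult summable_geometric) simp
  qed simp
  moreover have "(\<lambda>j. \<Sum>n. inner_term k q j n) = (\<lambda>_. suminf (inner_term k q 0))"
    by (rule ext, rule const)
  ultimately have "suminf (inner_term k q 0) = suminf b"
    by (simp add: LIMSEQ_const_iff)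
  also have "suminf b = L"
    unfolding b_def by (rule sums_unique[symmetric, OF sums_single])
  finally have "suminf (inner_term k q j) = L"
    using const[of j] by simp
  moreover have "summable (inner_term k q j)"
    using summable_norm_inner_term[OF q] by (rule summable_norm_cancel)
  ultimately show ?thesis
    unfolding L_def by (simp add: summable_sums_iff)
qed

section \<open>The Jacobi triple product\<close>

(* 1 / (x^2;x^2)_n, extended by 0 to negative n so that the Gaussian binomials in jtp_coeff
   vanish outside -N..N. *)
definition inv_qfact :: "complex \<Rightarrow> int \<Rightarrow> complex" where
  "inv_qfact x n = (if n < 0 then 0 else inverse (qpoch (x^2) (x^2) (nat n)))"

(* (-1)^j x^(j^2) times the Gaussian binomial [2N, N+j] in base x^2. *)
definition jtp_coeff :: "complex \<Rightarrow> nat \<Rightarrow> int \<Rightarrow> complex" where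
  "jtp_coeff x N j = (-1) powi j * x powi (j * j) * qpoch (x^2) (x^2) (2 * N)
     * inv_qfact x (int N - j) * inv_qfact x (int N + j)"

lemma inv_qfact_pred:
  assumes x: "norm x < 1"
  shows "inv_qfact x (n - 1) = (1 - x powi (2 * n)) * inv_qfact x n"
proof (cases "n > 0")
  case True
  define m where "m = nat n - 1"
  have m: "n = int (Suc m)"
    using True by (simp add: m_def)
  have x2: "norm (x^2) < 1"
    using x by (simp add: norm_power power_less_one_iff)
  have "2 * n = int (2 * Suc m)"
    using m by simp
  then have "x powi (2 * n) = x^2 * (x^2)^m"
    by (simp only: power_int_of_nat power_mult power_Suc)
  moreover have "1 - x^2 * (x^2)^m \<noteq> 0" "qpoch (x^2) (x^2) m \<noteq> 0"
    using norm_mult_power_less_1[of "x^2" "x^2" m] qpoch_nonzero[of "x^2" "x^2" m] x2 by auto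
  moreover have "nat n = Suc m" "nat (n - 1) = m"
    using m by simp_all
  ultimately show ?thesis
    using True by (simp add: inv_qfact_def qpoch_Suc)
next
  case False
  then show ?thesis
    by (cases "n = 0") (simp_all add: inv_qfact_def)
qed

lemma jtp_coeff_identity:
  fixes x w t :: complex
  assumes "x \<noteq> 0" "t \<noteq> 0"
  shows "(1 - w^2 / x^2) * (1 - w^2)
       = (1 + (w / x)^2) * ((1 - w / t) * (1 - w * t)) + w / t * ((1 - w * t / x^2) * (1 - w * t))
         + w * t * ((1 - w / (x^2 * t)) * (1 - w / t))"
  using assms by (simp add: field_simps) algebra

lemma jtp_coeff_powers:
  fixes x :: complex and N :: nat and j :: int
  assumes x: "x \<noteq> 0"
  shows "x powi (2 * (int N + 1 - j)) = x ^ (2 * N + 2) / x powi (2 * j)"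
    "x powi (2 * (int N + 1 + j)) = x ^ (2 * N + 2) * x powi (2 * j)"
    "x powi (2 * (int N + 1 + j - 1)) = x ^ (2 * N + 2) * x powi (2 * j) / x^2"
    "x powi (2 * (int N + 1 - j - 1)) = x ^ (2 * N + 2) / (x^2 * x powi (2 * j))"
    "x powi ((j - 1) * (j - 1)) = x powi (j * j) * x / x powi (2 * j)"
    "x powi ((j + 1) * (j + 1)) = x powi (j * j) * x * x powi (2 * j)"
  using x power_int_of_nat[of x "N * 2"]
  by (simp_all add: power_int_add power_int_diff field_simps power2_eq_square)

lemma jtp_coeff_Suc:
  fixes x :: complex
  assumes x: "norm x < 1" "x \<noteq> 0"
  shows "jtp_coeff x (Suc N) j = (1 + (x ^ (2 * N + 1))^2) * jtp_coeff x N j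
           - x ^ (2 * N + 1) * jtp_coeff x N (j - 1) - x ^ (2 * N + 1) * jtp_coeff x N (j + 1)"
proof -
  define W T where "W = x ^ (2 * N + 2)" and "T = x powi (2 * j)"
  define S P R where "S = (-1) powi j * x powi (j * j)" and "P = qpoch (x^2) (x^2) (2 * N)"
    and "R = inv_qfact x (int N + 1 - j) * inv_qfact x (int N + 1 + j)"
  have T: "T \<noteq> 0"
    using x by (simp add: T_def)
  have idx: "int N - j = int N + 1 - j - 1" "int N + j = int N + 1 + j - 1"
    "int N - (j - 1) = int N + 1 - j" "int N + (j - 1) = int N + 1 + j - 1 - 1"
    "int N - (j + 1) = int N + 1 - j - 1 - 1" "int N + (j + 1) = int N + 1 + j"
    "int (Suc N) - j = int N + 1 - j" "int (Suc N) + j = int N + 1 + j"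
    by simp_all
  have signs: "(-1 :: complex) powi (j - 1) = - ((-1) powi j)" "(-1 :: complex) powi (j + 1) = - ((-1) powi j)"
    by (simp_all add: power_int_diff power_int_add)
  have qpoch_Suc_N: "qpoch (x^2) (x^2) (2 * Suc N) = P * ((1 - W^2 / x^2) * (1 - W^2))"
  proof -
    have "x^2 * (x^2)^(2 * N) = W^2 / x^2" "x^2 * (x^2)^Suc (2 * N) = W^2"
      using x unfolding W_def by (simp_all add: field_simps algebra_simps flip: power_mult power_add)
    then show ?thesis
      by (simp add: P_def qpoch_Suc)
  qed
  have terms:
    "jtp_coeff x (Suc N) j = S * P * R * ((1 - W^2 / x^2) * (1 - W^2))"
    "jtp_coeff x N j = S * P * R * ((1 - W / T) * (1 - W * T))"
    "jtp_coeff x N (j - 1) = - S * P * R * (x / T) * ((1 - W * T / x^2) * (1 - W * T))"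
    "jtp_coeff x N (j + 1) = - S * P * R * (x * T) * ((1 - W / (x^2 * T)) * (1 - W / T))"
    unfolding jtp_coeff_def idx inv_qfact_pred[OF x(1)] signs qpoch_Suc_N
      jtp_coeff_powers(1-4)[OF x(2), of N j, folded W_def T_def]
      jtp_coeff_powers(5,6)[OF x(2), of j, folded T_def]
    using x T by (simp_all add: S_def P_def R_def field_simps)
  have y: "x ^ (2 * N + 1) = W / x"
    using x by (simp add: W_def)
  show ?thesis
    unfolding terms y jtp_coeff_identity[OF x(2) T, of W]
    using x T by (simp add: field_simps)
qed

lemma jtp_coeff_eq_0:
  assumes "j < - int N \<or> j > int N"
  shows "jtp_coeff x N j = 0"
  using assms by (auto simp: jtp_coeff_def inv_qfact_def)

definition jtp_poly :: "complex \<Rightarrow> complex \<Rightarrow> nat \<Rightarrow> complex" where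
  "jtp_poly x z N = (\<Sum>j = - int N..int N. jtp_coeff x N j * z powi j)"

lemma jtp_poly_shift:
  fixes z :: complex
  assumes z: "z \<noteq> 0"
  shows "(\<Sum>j = - int (Suc N)..int (Suc N). jtp_coeff x N j * z powi j) = jtp_poly x z N"
    "(\<Sum>j = - int (Suc N)..int (Suc N). jtp_coeff x N (j - 1) * z powi j) = z * jtp_poly x z N"
    "(\<Sum>j = - int (Suc N)..int (Suc N). jtp_coeff x N (j + 1) * z powi j) = jtp_poly x z N / z"
proof -
  have shift: "(\<Sum>j = - int (Suc N)..int (Suc N). jtp_coeff x N (j + c) * z powi j)
                 = z powi (- c) * jtp_poly x z N" if "\<bar>c\<bar> \<le> 1" for c
  proof -
    have "(\<Sum>j = - int (Suc N)..int (Suc N). jtp_coeff x N (j + c) * z powi j)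
        = (\<Sum>i = - int (Suc N) + c..int (Suc N) + c. jtp_coeff x N i * z powi (i - c))"
      by (rule sum.reindex_bij_witness[of _ "\<lambda>i. i - c" "\<lambda>j. j + c"]) auto
    also have "\<dots> = (\<Sum>i = - int N..int N. jtp_coeff x N i * z powi (i - c))"
      using that by (intro sum.mono_neutral_right) (auto simp: jtp_coeff_eq_0)
    also have "\<dots> = z powi (- c) * jtp_poly x z N"
      unfolding jtp_poly_def sum_distrib_left
      using z by (intro sum.cong) (auto simp: power_int_diff power_int_minus field_simps)
    finally show ?thesis .
  qed
  from shift[of 0] shift[of "-1"] shift[of 1] z
  show "(\<Sum>j = - int (Suc N)..int (Suc N). jtp_coeff x N j * z powi j) = jtp_poly x z N"
    "(\<Sum>j = - int (Suc N)..int (Suc N). jtp_coeff x N (j - 1) * z powi j) = z * jtp_poly x z N"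
    "(\<Sum>j = - int (Suc N)..int (Suc N). jtp_coeff x N (j + 1) * z powi j) = jtp_poly x z N / z"
    by (simp_all add: power_int_minus divide_inverse)
qed

lemma jtp_poly_Suc:
  fixes x z :: complex
  assumes x: "norm x < 1" "x \<noteq> 0" and z: "z \<noteq> 0"
  shows "jtp_poly x z (Suc N)
           = jtp_poly x z N * ((1 - x ^ (2 * N + 1) * z) * (1 - x ^ (2 * N + 1) / z))"
proof -
  define y where "y = x ^ (2 * N + 1)"
  have "jtp_poly x z (Suc N) = (\<Sum>j = - int (Suc N)..int (Suc N). jtp_coeff x (Suc N) j * z powi j)"
    by (rule jtp_poly_def)
  also have "\<dots> = (1 + y^2) * (\<Sum>j = - int (Suc N)..int (Suc N). jtp_coeff x N j * z powi j)
      - y * (\<Sum>j = - int (Suc N)..int (Suc N). jtp_coeff x N (j - 1) * z powi j)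
      - y * (\<Sum>j = - int (Suc N)..int (Suc N). jtp_coeff x N (j + 1) * z powi j)"
    unfolding jtp_coeff_Suc[OF x] y_def sum_distrib_left sum_subtractf[symmetric]
    by (intro sum.cong) (simp_all add: algebra_simps)
  also have "\<dots> = (1 + y^2) * jtp_poly x z N - y * (z * jtp_poly x z N) - y * (jtp_poly x z N / z)"
    unfolding jtp_poly_shift[OF z] ..
  finally show ?thesis
    using z by (simp add: y_def field_simps power2_eq_square)
qed

lemma finite_jtp:
  fixes x z :: complex
  assumes x: "norm x < 1" "x \<noteq> 0" and z: "z \<noteq> 0"
  shows "qpoch (x * z) (x^2) N * qpoch (x / z) (x^2) N = jtp_poly x z N"
proof (induction N)
  case 0
  then show ?case
    by (simp add: jtp_poly_def jtp_coeff_def inv_qfact_def)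
next
  case (Suc N)
  have "(x^2)^N = x ^ (2 * N)"
    by (simp add: power_mult)
  then show ?case
    using Suc by (simp add: qpoch_Suc jtp_poly_Suc[OF x z] mult_ac)
qed

(* The terms m and -m of sum over all integers m of (-1)^m x^(m^2) z^m; the term m = 0 is
   counted twice, whence the "+ 1" in jacobi_triple_product. *)
definition theta_term :: "complex \<Rightarrow> complex \<Rightarrow> nat \<Rightarrow> complex" where
  "theta_term x z m = (-1) ^ m * x ^ (m * m) * (z ^ m + inverse z ^ m)"

lemma jtp_poly_symmetric:
  fixes x z :: complex
  shows "jtp_poly x z N + jtp_coeff x N 0 = qpoch (x^2) (x^2) (2 * N)
           * (\<Sum>m\<le>N. theta_term x z m * inv_qfact x (int N - int m) * inv_qfact x (int N + int m))"
proof -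
  have paired: "jtp_coeff x N (int m) * z powi int m + jtp_coeff x N (- int m) * z powi (- int m)
      = qpoch (x^2) (x^2) (2 * N) * (theta_term x z m * inv_qfact x (int N - int m) * inv_qfact x (int N + int m))"
    for m
  proof -
    have "x powi (int m * int m) = x ^ (m * m)" "inverse ((-1 :: complex) ^ m) = (-1) ^ m"
      by (simp_all flip: of_nat_mult power_inverse)
    then show ?thesis
      by (simp add: jtp_coeff_def theta_term_def power_int_minus power_int_minus_one_minus
          power_inverse algebra_simps)
  qed
  have "jtp_poly x z N + jtp_coeff x N 0
      = (\<Sum>m\<le>N. jtp_coeff x N (int m) * z powi int m + jtp_coeff x N (- int m) * z powi (- int m))"
    using sum_int_symmetric[of "\<lambda>j. jtp_coeff x N j * z powi j" N] by (simp add: jtp_poly_def)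
  then show ?thesis
    unfolding paired sum_distrib_left .
qed

lemma finite_theta_sum:
  fixes x z :: complex
  assumes x: "norm x < 1" "x \<noteq> 0" and z: "z \<noteq> 0"
  shows "(\<Sum>m\<le>N. theta_term x z m * inv_qfact x (int N - int m) * inv_qfact x (int N + int m))
           = qpoch (x * z) (x^2) N * qpoch (x / z) (x^2) N / qpoch (x^2) (x^2) (2 * N) + inv_qfact x (int N) ^ 2"
proof -
  have "qpoch (x^2) (x^2) (2 * N) \<noteq> 0"
    using x by (intro qpoch_nonzero) (auto simp: norm_power power_less_one_iff power_le_one)
  moreover have "jtp_coeff x N 0 = qpoch (x^2) (x^2) (2 * N) * inv_qfact x (int N) ^ 2"
    by (simp add: jtp_coeff_def power2_eq_square)
  ultimately show ?thesis
    using jtp_poly_symmetric[of x z N] finite_jtp[OF x z, of N] by (simp add: field_simps)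
qed

lemma inv_qfact_bounded:
  assumes "norm x < 1"
  obtains B where "\<And>n. norm (inv_qfact x n) \<le> B"
proof -
  have "norm (x^2) < 1"
    using assms by (simp add: norm_power power_less_one_iff)
  then obtain B where B: "\<And>n. norm (inverse (qpoch (x^2) (x^2) n)) \<le> B"
    using Bseq_inverse_qpoch[of "x^2" "x^2"] unfolding Bseq_def by auto
  then have "norm (inv_qfact x n) \<le> B" for n
    using order_trans[OF norm_ge_zero B[of 0]] by (simp add: inv_qfact_def)
  then show ?thesis
    using that by blast
qed

lemma tendsto_inv_qfact:
  fixes x :: complex and c :: int
  assumes "norm x < 1"
  shows "(\<lambda>N. inv_qfact x (int N + c)) \<longlonglongrightarrow> inverse (qpoch_inf (x^2) (x^2))"
proof (rule LIMSEQ_offset[where k = "nat \<bar>c\<bar>"])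
  have x2: "norm (x^2) < 1"
    using assms by (simp add: norm_power power_less_one_iff)
  have "\<not> int (N + nat \<bar>c\<bar>) + c < 0" "nat (int (N + nat \<bar>c\<bar>) + c) = N + nat (\<bar>c\<bar> + c)" for N
    by arith+
  then have "inv_qfact x (int (N + nat \<bar>c\<bar>) + c) = inverse (qpoch (x^2) (x^2) (N + nat (\<bar>c\<bar> + c)))" for N
    by (simp add: inv_qfact_def)
  moreover have "(\<lambda>N. inverse (qpoch (x^2) (x^2) (N + nat (\<bar>c\<bar> + c)))) \<longlonglongrightarrow> inverse (qpoch_inf (x^2) (x^2))"
    using x2 by (intro tendsto_inverse tendsto_qpoch_inf filterlim_add_const_nat_at_top qpoch_inf_nonzero)
  ultimately show "(\<lambda>N. inv_qfact x (int (N + nat \<bar>c\<bar>) + c)) \<longlonglongrightarrow> inverse (qpoch_inf (x^2) (x^2))"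
    by simp
qed

lemma summable_norm_theta_term:
  assumes "norm x < 1"
  shows "summable (\<lambda>m. norm (theta_term x z m))"
proof (rule summable_comparison_test[rotated])
  show "summable (\<lambda>m. norm x ^ (m * m) * norm z ^ m + norm x ^ (m * m) * norm (inverse z) ^ m)"
    using assms by (intro summable_add summable_power_square_mult_power) auto
  have "norm (theta_term x z m) \<le> norm x ^ (m * m) * norm z ^ m + norm x ^ (m * m) * norm (inverse z) ^ m"
    for m
  proof -
    have "norm (theta_term x z m) = norm x ^ (m * m) * norm (z ^ m + inverse z ^ m)"
      by (simp add: theta_term_def norm_mult norm_power)
    also have "\<dots> \<le> norm x ^ (m * m) * (norm z ^ m + norm (inverse z) ^ m)"
      using norm_triangle_ineq[of "z ^ m" "inverse z ^ m"] by (intro mult_left_mono) (simp_all add: norm_power)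
    finally show ?thesis
      by (simp add: distrib_left)
  qed
  then show "\<exists>N. \<forall>m\<ge>N. norm (norm (theta_term x z m))
          \<le> norm x ^ (m * m) * norm z ^ m + norm x ^ (m * m) * norm (inverse z) ^ m"
    by simp
qed

lemma tendsto_theta_sum_weighted:
  fixes x z :: complex
  assumes x: "norm x < 1"
  shows "(\<lambda>N. \<Sum>m. theta_term x z m * inv_qfact x (int N - int m) * inv_qfact x (int N + int m))
           \<longlonglongrightarrow> (\<Sum>m. theta_term x z m * inverse (qpoch_inf (x^2) (x^2)) ^ 2)"
proof -
  obtain B where B: "\<And>n. norm (inv_qfact x n) \<le> B"
    using inv_qfact_bounded[OF x] by blast
  have bound: "norm (theta_term x z m * inv_qfact x (int N - int m) * inv_qfact x (int N + int m))
          \<le> norm (theta_term x z m) * (B * B)" for m N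
  proof -
    have "norm (inv_qfact x (int N - int m)) * norm (inv_qfact x (int N + int m)) \<le> B * B"
      using B by (intro mult_mono) (auto intro: order_trans[OF norm_ge_zero])
    then show ?thesis
      by (simp add: norm_mult mult_left_mono mult.assoc)
  qed
  show ?thesis
  proof (rule tannerys_theorem[THEN conjunct2, THEN conjunct2])
    show "(\<lambda>N. theta_term x z m * inv_qfact x (int N - int m) * inv_qfact x (int N + int m))
            \<longlonglongrightarrow> theta_term x z m * inverse (qpoch_inf (x^2) (x^2)) ^ 2" for m
      using tendsto_inv_qfact[OF x, of "- int m"] tendsto_inv_qfact[OF x, of "int m"]
      by (auto simp: power2_eq_square mult.assoc intro!: tendsto_intros)
    show "\<forall>\<^sub>F (m, N) in at_top \<times>\<^sub>F sequentially.
        norm (theta_term x z m * inv_qfact x (int N - int m) * inv_qfact x (int N + int m))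
          \<le> norm (theta_term x z m) * (B * B)"
      using bound by (intro always_eventually) auto
    show "summable (\<lambda>m. norm (theta_term x z m) * (B * B))"
      using summable_norm_theta_term[OF x] by (rule summable_mult2)
  qed simp
qed

theorem jacobi_triple_product:
  fixes x z :: complex
  assumes x: "norm x < 1" "x \<noteq> 0" and z: "z \<noteq> 0"
  shows "theta_term x z sums (qpoch_inf (x * z) (x^2) * qpoch_inf (x / z) (x^2) * qpoch_inf (x^2) (x^2) + 1)"
proof -
  define Qi where "Qi = qpoch_inf (x^2) (x^2)"
  have x2: "norm (x^2) < 1"
    using x by (simp add: norm_power power_less_one_iff)
  have Qi: "Qi \<noteq> 0"
    unfolding Qi_def using x2 by (rule qpoch_inf_nonzero[OF x2])
  have "(\<Sum>m. theta_term x z m * inv_qfact x (int N - int m) * inv_qfact x (int N + int m))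
      = qpoch (x * z) (x^2) N * qpoch (x / z) (x^2) N / qpoch (x^2) (x^2) (2 * N) + inv_qfact x (int N) ^ 2" for N
    unfolding finite_theta_sum[OF x z, symmetric]
    by (rule suminf_finite) (auto simp: inv_qfact_def)
  moreover have "(\<lambda>N. qpoch (x * z) (x^2) N * qpoch (x / z) (x^2) N / qpoch (x^2) (x^2) (2 * N) + inv_qfact x (int N) ^ 2)
      \<longlonglongrightarrow> qpoch_inf (x * z) (x^2) * qpoch_inf (x / z) (x^2) / Qi + inverse Qi ^ 2"
    using tendsto_inv_qfact[OF x(1), of 0] Qi mult_nat_left_at_top[of 2] filterlim_ident
    unfolding Qi_def by (intro tendsto_intros tendsto_qpoch_inf[OF x2]) simp_all
  ultimately have "(\<Sum>m. theta_term x z m * inverse Qi ^ 2)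
      = qpoch_inf (x * z) (x^2) * qpoch_inf (x / z) (x^2) / Qi + inverse Qi ^ 2"
    using tendsto_theta_sum_weighted[OF x(1), of z] LIMSEQ_unique unfolding Qi_def by auto
  moreover have "summable (theta_term x z)"
    using summable_norm_theta_term[OF x(1)] by (rule summable_norm_cancel)
  moreover from this have "(\<Sum>m. theta_term x z m * inverse Qi ^ 2) = suminf (theta_term x z) * inverse Qi ^ 2"
    by (rule suminf_mult2[symmetric])
  ultimately have "suminf (theta_term x z) = qpoch_inf (x * z) (x^2) * qpoch_inf (x / z) (x^2) * Qi + 1"
    using Qi by (simp add: field_simps power2_eq_square)
  with \<open>summable (theta_term x z)\<close> show ?thesis
    unfolding Qi_def by (simp add: sums_iff)
qed

section \<open>Rational powers of q and the mod 5 dissection\<close>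

lemma qpow_add: "qpow q (a + b) = qpow q a * qpow q b"
  by (simp add: qpow_def distrib_right exp_add)

lemma qpow_minus: "qpow q (- a) = inverse (qpow q a)"
  by (simp add: qpow_def exp_minus)

lemma qpow_of_nat_mult: "qpow q (real n * a) = qpow q a ^ n"
proof -
  have "complex_of_real (real n * a) * Ln q = of_nat n * (complex_of_real a * Ln q)"
    by simp
  then show ?thesis
    unfolding qpow_def by (simp only: exp_of_nat_mult)
qed

lemma qpow_of_nat: "q \<noteq> 0 \<Longrightarrow> qpow q (real n) = q ^ n"
  using qpow_of_nat_mult[of q n 1] by (simp add: qpow_def)

lemma qpow_nonzero: "qpow q a \<noteq> 0"
  by (simp add: qpow_def)

lemma norm_qpow_less_1:
  assumes "norm q < 1" "q \<noteq> 0" "a > 0"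
  shows "norm (qpow q a) < 1"
proof -
  have "a * ln (norm q) < 0"
    using assms by (simp add: mult_pos_neg)
  then show ?thesis
    using assms(2) by (simp add: qpow_def)
qed

lemma qpoch_mod5_dissection:
  "qpoch q q (5 * N) = qpoch q (q^5) N * qpoch (q^2) (q^5) N * qpoch (q^3) (q^5) N
     * qpoch (q^4) (q^5) N * qpoch (q^5) (q^5) N"
proof (induction N)
  case (Suc N)
  define X where "X = (q^5)^N"
  have X: "q ^ (5 * N) = X"
    by (simp add: X_def power_mult)
  have idx: "5 * Suc N = Suc (Suc (Suc (Suc (Suc (5 * N)))))"
    by simp
  show ?case
    unfolding idx qpoch_Suc Suc.IH X_def[symmetric] power_Suc X by algebra
qed simp

lemma qpoch_inf_mod5_dissection:
  assumes q: "norm q < 1"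
  shows "qpoch_inf q q = qpoch_inf q (q^5) * qpoch_inf (q^2) (q^5) * qpoch_inf (q^3) (q^5)
     * qpoch_inf (q^4) (q^5) * qpoch_inf (q^5) (q^5)"
proof -
  have q5: "norm (q^5) < 1"
    using q by (simp add: norm_power power_less_one_iff)
  have "(\<lambda>N. qpoch q q (5 * N)) \<longlonglongrightarrow> qpoch_inf q q"
    using q mult_nat_left_at_top[of 5] by (intro tendsto_qpoch_inf) simp_all
  moreover have "(\<lambda>N. qpoch q q (5 * N)) \<longlonglongrightarrow> qpoch_inf q (q^5) * qpoch_inf (q^2) (q^5)
      * qpoch_inf (q^3) (q^5) * qpoch_inf (q^4) (q^5) * qpoch_inf (q^5) (q^5)"
    unfolding qpoch_mod5_dissection using q5 filterlim_ident by (intro tendsto_mult tendsto_qpoch_inf)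
  ultimately show ?thesis
    by (rule LIMSEQ_unique)
qed

lemma qpoch_inf_quotient_mod5:
  assumes q: "norm q < 1"
  shows "qpoch_inf (q^2) (q^5) * qpoch_inf (q^3) (q^5) * qpoch_inf (q^5) (q^5) / qpoch_inf q q
           = inverse (qpoch_inf q (q^5) * qpoch_inf (q^4) (q^5))"
proof -
  have "norm (q ^ n) < 1" if "n > 0" for n
    using q that by (simp add: norm_power power_less_one_iff)
  then have nz: "qpoch_inf (q ^ n) (q^5) \<noteq> 0" if "n > 0" for n
    using that by (intro qpoch_inf_nonzero) simp_all
  from nz[of 1] nz[of 4] nz[of 2] nz[of 3] nz[of 5] show ?thesis
    unfolding qpoch_inf_mod5_dissection[OF q] by (simp add: field_simps)
qed

section \<open>The double series\<close>

lemma theta_term_qpow_has_sum: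
  assumes q: "norm q < 1" "q \<noteq> 0" and s: "s > 0"
  shows "(theta_term (qpow q s) (qpow q r) has_sum
            qpoch_inf (qpow q (s - r)) (qpow q (2 * s)) * qpoch_inf (qpow q (s + r)) (qpow q (2 * s))
              * qpoch_inf (qpow q (2 * s)) (qpow q (2 * s)) + 1) UNIV"
    and "(\<lambda>j. norm (theta_term (qpow q s) (qpow q r) j)) summable_on UNIV"
proof -
  have A: "norm (qpow q s) < 1" "qpow q s \<noteq> 0"
    using norm_qpow_less_1[OF q s] qpow_nonzero by auto
  have "qpow q (s - r) = qpow q s / qpow q r" "qpow q (s + r) = qpow q s * qpow q r"
    "qpow q (2 * s) = qpow q s ^ 2"
    using qpow_add[of q s "- r"] qpow_add[of q s r] qpow_of_nat_mult[of q 2 s]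
    by (simp_all add: qpow_minus divide_inverse)
  then show "(theta_term (qpow q s) (qpow q r) has_sum
            qpoch_inf (qpow q (s - r)) (qpow q (2 * s)) * qpoch_inf (qpow q (s + r)) (qpow q (2 * s))
              * qpoch_inf (qpow q (2 * s)) (qpow q (2 * s)) + 1) UNIV"
    using jacobi_triple_product[OF A qpow_nonzero] summable_norm_theta_term[OF A(1)]
    by (intro norm_summable_imp_has_sum) (simp_all add: mult_ac)
  show "(\<lambda>j. norm (theta_term (qpow q s) (qpow q r) j)) summable_on UNIV"
    using summable_norm_theta_term[OF A(1)] by (intro norm_summable_imp_summable_on) simp
qed

lemma inner_term_div_has_sum:
  assumes q: "norm q < 1" and k: "k \<noteq> 1"
  shows "((\<lambda>n. inner_term k q j n / (1 - k)) has_sum qpoch_inf (k * q) q / qpoch_inf q q) UNIV"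
proof (rule norm_summable_imp_has_sum)
  show "summable (\<lambda>n. norm (inner_term k q j n / (1 - k)))"
    using summable_divide[OF summable_norm_inner_term[OF q], of k j "norm (1 - k)"]
    by (simp add: norm_divide)
  have "qpoch_inf k q / qpoch_inf q q / (1 - k) = qpoch_inf (k * q) q / qpoch_inf q q"
    using k by (simp add: qpoch_inf_shift[OF q, of k])
  then show "(\<lambda>n. inner_term k q j n / (1 - k)) sums (qpoch_inf (k * q) q / qpoch_inf q q)"
    using sums_divide[OF inner_term_sums[OF q, of k j], of "1 - k"] by simp
qed

lemma inner_term_div_dominated:
  assumes q: "norm q < 1"
  obtains g where "g summable_on UNIV" "\<And>j n. norm (inner_term k q j n / (1 - k)) \<le> g n"
proof -
  obtain C where C: "\<And>j n. norm (inner_term k q j n) \<le> C * norm q ^ n"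
    using inner_term_bound_geometric[OF q] by blast
  have "summable (\<lambda>n. norm (C / norm (1 - k) * norm q ^ n))"
    using q by (simp add: abs_mult summable_mult summable_geometric)
  then have "(\<lambda>n. C / norm (1 - k) * norm q ^ n) summable_on UNIV"
    by (rule norm_summable_imp_summable_on)
  moreover have "norm (inner_term k q j n / (1 - k)) \<le> C / norm (1 - k) * norm q ^ n" for j n
    using C[of j n] by (simp add: norm_divide divide_right_mono)
  ultimately show ?thesis
    using that by blast
qed

lemma summand_factorization:
  assumes q0: "q \<noteq> 0"
  shows "(1 - k * q ^ (2 * n + 2 * j)) * (1 + qpow q (2 * r * real j)) * qpoch k q n * qpoch k q (n + 2 * j)
           * qpow q (s * real j ^ 2 - real j * r + 2 * real n * real j + real n ^ 2) * (-1) ^ j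
           / ((1 - k) * qpoch q q n * qpoch q q (n + 2 * j))
       = theta_term (qpow q s) (qpow q r) j * (inner_term k q j n / (1 - k))"
proof -
  define A B where "A = qpow q s" and "B = qpow q r"
  have "s * real j ^ 2 - real j * r + 2 * real n * real j + real n ^ 2
      = real (j * j) * s + (real j * (- r) + real (2 * n * j + n ^ 2))"
    by (simp add: algebra_simps power2_eq_square)
  then have exponent: "qpow q (s * real j ^ 2 - real j * r + 2 * real n * real j + real n ^ 2)
      = A ^ (j * j) * (inverse B ^ j * q ^ (2 * n * j + n ^ 2))"
    by (simp only: qpow_add qpow_of_nat_mult qpow_minus qpow_of_nat[OF q0] A_def B_def)
  have "qpow q (2 * r * real j) = B ^ j * B ^ j"
    using qpow_of_nat_mult[of q j "2 * r"] qpow_of_nat_mult[of q 2 r]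
    by (simp add: B_def mult_ac power2_eq_square power_mult_distrib)
  moreover have "B ^ j \<noteq> 0"
    using qpow_nonzero[of q r] by (simp add: B_def)
  then have theta_factor: "(1 + B ^ j * B ^ j) * inverse B ^ j = B ^ j + inverse B ^ j"
    by (simp add: power_inverse field_simps)
  ultimately show ?thesis
    unfolding theta_term_def inner_term_def exponent A_def[symmetric] B_def[symmetric]
    by (simp add: divide_inverse inverse_mult_distrib mult_ac flip: theta_factor)
qed

theorem mainTheorem13:
  fixes s r :: real and q k :: complex
  assumes "s \<in> \<rat>" "s > 0" "r \<in> \<rat>" "norm q < 1" "q \<noteq> 0" "k \<noteq> 1"
  shows "((\<lambda>(j, n). (1 - k * q ^ (2 * n + 2 * j)) * (1 + qpow q (2 * r * real j))
            * qpoch k q n * qpoch k q (n + 2 * j)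
            * qpow q (s * real j ^ 2 - real j * r + 2 * real n * real j + real n ^ 2) * (-1) ^ j
            / ((1 - k) * qpoch q q n * qpoch q q (n + 2 * j)))
         has_sum
           (qpoch_inf (k * q) q * qpoch_inf (qpow q (s - r)) (qpow q (2 * s))
              * qpoch_inf (qpow q (s + r)) (qpow q (2 * s)) * qpoch_inf (qpow q (2 * s)) (qpow q (2 * s))
              / qpoch_inf q q
            + qpoch_inf (k * q) q / qpoch_inf q q)) UNIV
       \<and> (s = 5 / 2 \<and> r = 1 / 2 \<longrightarrow>
           qpoch_inf (k * q) q * qpoch_inf (qpow q (s - r)) (qpow q (2 * s))
              * qpoch_inf (qpow q (s + r)) (qpow q (2 * s)) * qpoch_inf (qpow q (2 * s)) (qpow q (2 * s))
              / qpoch_inf q q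
            + qpoch_inf (k * q) q / qpoch_inf q q
           = qpoch_inf (k * q) q / (qpoch_inf q (q ^ 5) * qpoch_inf (q ^ 4) (q ^ 5))
            + qpoch_inf (k * q) q / qpoch_inf q q)"
proof -
  have q: "norm q < 1" "q \<noteq> 0" and k: "k \<noteq> 1" and s: "s > 0"
    using assms by auto
  obtain g where g: "g summable_on UNIV" "\<And>j n. norm (inner_term k q j n / (1 - k)) \<le> g n"
    using inner_term_div_dominated[OF q(1)] by blast
  have "((\<lambda>(j, n). theta_term (qpow q s) (qpow q r) j * (inner_term k q j n / (1 - k))) has_sum
          (qpoch_inf (qpow q (s - r)) (qpow q (2 * s)) * qpoch_inf (qpow q (s + r)) (qpow q (2 * s))
             * qpoch_inf (qpow q (2 * s)) (qpow q (2 * s)) + 1) * (qpoch_inf (k * q) q / qpoch_inf q q))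
        (UNIV \<times> UNIV)"
    by (rule has_sum_mult_dominated[OF theta_term_qpow_has_sum[OF q s] inner_term_div_has_sum[OF q(1) k] g])
  moreover have "qpoch_inf (k * q) q * qpoch_inf (qpow q (s - r)) (qpow q (2 * s))
      * qpoch_inf (qpow q (s + r)) (qpow q (2 * s)) * qpoch_inf (qpow q (2 * s)) (qpow q (2 * s))
      / qpoch_inf q q = qpoch_inf (k * q) q / (qpoch_inf q (q ^ 5) * qpoch_inf (q ^ 4) (q ^ 5))"
    if "s = 5 / 2" "r = 1 / 2"
  proof -
    have "qpow q (s - r) = q^2" "qpow q (s + r) = q^3" "qpow q (2 * s) = q^5"
      using qpow_of_nat[OF q(2), of 2] qpow_of_nat[OF q(2), of 3] qpow_of_nat[OF q(2), of 5]
      unfolding that by simp_all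
    then show ?thesis
      using qpoch_inf_quotient_mod5[OF q(1)] by (simp add: divide_inverse mult.assoc)
  qed
  ultimately show ?thesis
    unfolding summand_factorization[OF q(2)] by (simp add: algebra_simps)
qed

end
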